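(* Let $\mathcal{C}$ be a category with a faithful functor $Q:\mathcal{C}\to\mathbf{Set}$ satisfying conditions (1Q) and (2Q) below for an object $A_0$ and an element $x_0\in Q(A_0)$. Then: 1. If $\mu:A\to B$ is a morphism such that $Q(\mu):Q(A)\to Q(B)$ is surjective, then $\mu$ is an epimorphism. 2. A morphism $\mu:A\to B$ is a monomorphism if and only if $Q(\mu)$ is injective. 3. If $\Phi$ is an automorphism of $\mathcal{C}$, then there exists an epimorphism $\eta:A_0\to\Phi(A_0)$; and if such an epimorphism $\eta$ is an isomorphism, then $\Phi$ is potentially inner.
   Context: (1Q): for every object $A$ of $\mathcal{C}$ and every $a\in Q(A)$ there is exactly one morphism $\alpha:A_0\to A$ with $Q(\alpha)(x_0)=a$. (2Q): for every object $A$ of $\mathcal{C}$ there is a morphism $\alpha:A\to A_0$ such that $Q(\alpha):Q(A)\to Q(A_0)$ is surjective. An automorphism $\Phi$ of $\mathcal{C}$ is called potentially inner if there is a family of bijections $s_A:Q(A)\to Q(\Phi(A))$, $A\in\mathrm{Ob}\,\mathcal{C}$, such that $Q(\Phi(\mu))\circ s_A=s_B\circ Q(\mu)$ for every morphism $\mu:A\to B$. *)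

theory Defs
  imports Main
begin

text \<open>A (small) category given by a set of objects, a set of morphisms,
  domain/codomain maps, identities and composition (comp g f = g after f).\<close>

record ('o, 'm) category =
  Ob   :: "'o set"
  Mor  :: "'m set"
  dom  :: "'m \<Rightarrow> 'o"
  cod  :: "'m \<Rightarrow> 'o"
  idm  :: "'o \<Rightarrow> 'm"
  comp :: "'m \<Rightarrow> 'm \<Rightarrow> 'm"

definition hom :: "('o, 'm) category \<Rightarrow> 'o \<Rightarrow> 'o \<Rightarrow> 'm set" where
  "hom C A B = {f \<in> Mor C. dom C f = A \<and> cod C f = B}"

definition is_category :: "('o, 'm) category \<Rightarrow> bool" where
  "is_category C \<longleftrightarrow>
     (\<forall>f \<in> Mor C. dom C f \<in> Ob C \<and> cod C f \<in> Ob C) \<and>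
     (\<forall>A \<in> Ob C. idm C A \<in> hom C A A) \<and>
     (\<forall>f \<in> Mor C. \<forall>g \<in> Mor C. cod C f = dom C g \<longrightarrow>
         comp C g f \<in> hom C (dom C f) (cod C g)) \<and>
     (\<forall>f \<in> Mor C. comp C f (idm C (dom C f)) = f \<and> comp C (idm C (cod C f)) f = f) \<and>
     (\<forall>f \<in> Mor C. \<forall>g \<in> Mor C. \<forall>h \<in> Mor C.
         cod C f = dom C g \<longrightarrow> cod C g = dom C h \<longrightarrow>
         comp C h (comp C g f) = comp C (comp C h g) f)"

definition epi :: "('o, 'm) category \<Rightarrow> 'm \<Rightarrow> bool" where
  "epi C \<mu> \<longleftrightarrow> \<mu> \<in> Mor C \<and>
     (\<forall>g \<in> Mor C. \<forall>h \<in> Mor C. dom C g = cod C \<mu> \<longrightarrow> dom C h = cod C \<mu> \<longrightarrow>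
        cod C g = cod C h \<longrightarrow> comp C g \<mu> = comp C h \<mu> \<longrightarrow> g = h)"

definition mono :: "('o, 'm) category \<Rightarrow> 'm \<Rightarrow> bool" where
  "mono C \<mu> \<longleftrightarrow> \<mu> \<in> Mor C \<and>
     (\<forall>g \<in> Mor C. \<forall>h \<in> Mor C. cod C g = dom C \<mu> \<longrightarrow> cod C h = dom C \<mu> \<longrightarrow>
        dom C g = dom C h \<longrightarrow> comp C \<mu> g = comp C \<mu> h \<longrightarrow> g = h)"

definition iso :: "('o, 'm) category \<Rightarrow> 'm \<Rightarrow> bool" where
  "iso C \<mu> \<longleftrightarrow> \<mu> \<in> Mor C \<and>
     (\<exists>\<nu> \<in> hom C (cod C \<mu>) (dom C \<mu>).
        comp C \<nu> \<mu> = idm C (dom C \<mu>) \<and> comp C \<mu> \<nu> = idm C (cod C \<mu>))"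

text \<open>A functor Q from C to Set: Q(A) = QO A is a set (inside a universe type 'x),
  and Q(f) = QM f is a map QO (dom f) \<rightarrow> QO (cod f) (only its values on
  QO (dom f) matter).\<close>

definition set_functor :: "('o, 'm) category \<Rightarrow> ('o \<Rightarrow> 'x set) \<Rightarrow> ('m \<Rightarrow> 'x \<Rightarrow> 'x) \<Rightarrow> bool" where
  "set_functor C QO QM \<longleftrightarrow>
     (\<forall>f \<in> Mor C. \<forall>x \<in> QO (dom C f). QM f x \<in> QO (cod C f)) \<and>
     (\<forall>A \<in> Ob C. \<forall>x \<in> QO A. QM (idm C A) x = x) \<and>
     (\<forall>f \<in> Mor C. \<forall>g \<in> Mor C. cod C f = dom C g \<longrightarrow>
        (\<forall>x \<in> QO (dom C f). QM (comp C g f) x = QM g (QM f x)))"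

definition faithful_set_functor :: "('o, 'm) category \<Rightarrow> ('o \<Rightarrow> 'x set) \<Rightarrow> ('m \<Rightarrow> 'x \<Rightarrow> 'x) \<Rightarrow> bool" where
  "faithful_set_functor C QO QM \<longleftrightarrow> set_functor C QO QM \<and>
     (\<forall>f \<in> Mor C. \<forall>g \<in> Mor C. dom C f = dom C g \<longrightarrow> cod C f = cod C g \<longrightarrow>
        (\<forall>x \<in> QO (dom C f). QM f x = QM g x) \<longrightarrow> f = g)"

definition cond_1Q :: "('o, 'm) category \<Rightarrow> ('o \<Rightarrow> 'x set) \<Rightarrow> ('m \<Rightarrow> 'x \<Rightarrow> 'x) \<Rightarrow> 'o \<Rightarrow> 'x \<Rightarrow> bool" where
  "cond_1Q C QO QM A0 x0 \<longleftrightarrow>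
     (\<forall>A \<in> Ob C. \<forall>a \<in> QO A. \<exists>!\<alpha>. \<alpha> \<in> hom C A0 A \<and> QM \<alpha> x0 = a)"

definition cond_2Q :: "('o, 'm) category \<Rightarrow> ('o \<Rightarrow> 'x set) \<Rightarrow> ('m \<Rightarrow> 'x \<Rightarrow> 'x) \<Rightarrow> 'o \<Rightarrow> bool" where
  "cond_2Q C QO QM A0 \<longleftrightarrow>
     (\<forall>A \<in> Ob C. \<exists>\<alpha> \<in> hom C A A0. QM \<alpha> ` QO A = QO A0)"

definition endofunctor :: "('o, 'm) category \<Rightarrow> ('o \<Rightarrow> 'o) \<Rightarrow> ('m \<Rightarrow> 'm) \<Rightarrow> bool" where
  "endofunctor C PO PM \<longleftrightarrow>
     (\<forall>A \<in> Ob C. PO A \<in> Ob C) \<and>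
     (\<forall>f \<in> Mor C. PM f \<in> hom C (PO (dom C f)) (PO (cod C f))) \<and>
     (\<forall>A \<in> Ob C. PM (idm C A) = idm C (PO A)) \<and>
     (\<forall>f \<in> Mor C. \<forall>g \<in> Mor C. cod C f = dom C g \<longrightarrow> PM (comp C g f) = comp C (PM g) (PM f))"

definition automorphism :: "('o, 'm) category \<Rightarrow> ('o \<Rightarrow> 'o) \<Rightarrow> ('m \<Rightarrow> 'm) \<Rightarrow> bool" where
  "automorphism C PO PM \<longleftrightarrow>
     (\<exists>PO' PM'. endofunctor C PO PM \<and> endofunctor C PO' PM' \<and>
        (\<forall>A \<in> Ob C. PO' (PO A) = A \<and> PO (PO' A) = A) \<and>
        (\<forall>f \<in> Mor C. PM' (PM f) = f \<and> PM (PM' f) = f))"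

definition potentially_inner ::
  "('o, 'm) category \<Rightarrow> ('o \<Rightarrow> 'x set) \<Rightarrow> ('m \<Rightarrow> 'x \<Rightarrow> 'x) \<Rightarrow> ('o \<Rightarrow> 'o) \<Rightarrow> ('m \<Rightarrow> 'm) \<Rightarrow> bool" where
  "potentially_inner C QO QM PO PM \<longleftrightarrow>
     (\<exists>s :: 'o \<Rightarrow> 'x \<Rightarrow> 'x.
        (\<forall>A \<in> Ob C. bij_betw (s A) (QO A) (QO (PO A))) \<and>
        (\<forall>\<mu> \<in> Mor C. \<forall>x \<in> QO (dom C \<mu>).
            QM (PM \<mu>) (s (dom C \<mu>) x) = s (cod C \<mu>) (QM \<mu> x)))"

end

theory Submission
  imports Defs
begin

text \<open>By (1Q) the pair (A0, x0) represents Q: evaluation at x0 is a bijection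
  from Hom(A0, A) onto Q(A), naturally in A. Faithfulness turns surjectivity or
  injectivity of Q(\<mu>) into cancellability of \<mu>; conversely, cancelling \<mu> on the
  representing morphisms of two points shows that a monomorphism is injective.
  An automorphism \<Phi> preserves epimorphisms, so the epimorphism onto A0 supplied by
  (2Q) for \<Phi>\<inverse>(A0) is carried to an epimorphism A0 \<rightarrow> \<Phi>(A0). If such an \<eta> is
  invertible, the chain of bijections
  Q(A) \<cong> Hom(A0, A) \<cong> Hom(\<Phi> A0, \<Phi> A) \<cong> Hom(A0, \<Phi> A) \<cong> Q(\<Phi> A),
  the third one being precomposition with \<eta>, is natural in A and witnesses
  that \<Phi> is potentially inner.\<close>

locale valid_category =
  fixes C :: "('o, 'm) category"
  assumes category: "is_category C"
begin

lemma hom_Ob: "f \<in> hom C A B \<Longrightarrow> A \<in> Ob C \<and> B \<in> Ob C"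
  using category unfolding is_category_def hom_def by auto

lemma comp_in_hom: "f \<in> hom C A B \<Longrightarrow> g \<in> hom C B D \<Longrightarrow> comp C g f \<in> hom C A D"
  using category unfolding is_category_def hom_def by auto

lemma comp_hom_assoc:
  "f \<in> hom C A B \<Longrightarrow> g \<in> hom C B D \<Longrightarrow> h \<in> hom C D E \<Longrightarrow>
    comp C h (comp C g f) = comp C (comp C h g) f"
  using category unfolding is_category_def hom_def by auto

lemma comp_idm_right: "f \<in> hom C A B \<Longrightarrow> comp C f (idm C A) = f"
  using category unfolding is_category_def hom_def by auto

lemma epiI:
  assumes "f \<in> hom C A B"
    and "\<And>D g h. g \<in> hom C B D \<Longrightarrow> h \<in> hom C B D \<Longrightarrow> comp C g f = comp C h f \<Longrightarrow> g = h"
  shows "epi C f"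
  using assms unfolding epi_def hom_def by auto

lemma epiD:
  "epi C f \<Longrightarrow> f \<in> hom C A B \<Longrightarrow> g \<in> hom C B D \<Longrightarrow> h \<in> hom C B D \<Longrightarrow>
    comp C g f = comp C h f \<Longrightarrow> g = h"
  unfolding epi_def hom_def by auto

lemma monoI:
  assumes "f \<in> hom C A B"
    and "\<And>D g h. g \<in> hom C D A \<Longrightarrow> h \<in> hom C D A \<Longrightarrow> comp C f g = comp C f h \<Longrightarrow> g = h"
  shows "mono C f"
  using assms unfolding mono_def hom_def by auto

lemma monoD:
  "mono C f \<Longrightarrow> f \<in> hom C A B \<Longrightarrow> g \<in> hom C D A \<Longrightarrow> h \<in> hom C D A \<Longrightarrow>
    comp C f g = comp C f h \<Longrightarrow> g = h"
  unfolding mono_def hom_def by auto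

lemma bij_betw_precomp_iso:
  assumes "iso C \<eta>" and \<eta>: "\<eta> \<in> hom C A A'"
  shows "bij_betw (\<lambda>\<gamma>. comp C \<gamma> \<eta>) (hom C A' B) (hom C A B)"
proof -
  obtain \<nu> where \<nu>: "\<nu> \<in> hom C A' A"
    and \<nu>\<eta>: "comp C \<nu> \<eta> = idm C A" and \<eta>\<nu>: "comp C \<eta> \<nu> = idm C A'"
    using assms unfolding iso_def hom_def by auto
  show ?thesis
  proof (rule bij_betw_byWitness[where f' = "\<lambda>\<delta>. comp C \<delta> \<nu>"])
    show "\<forall>\<gamma> \<in> hom C A' B. comp C (comp C \<gamma> \<eta>) \<nu> = \<gamma>"
      using \<eta> \<nu> \<eta>\<nu> by (simp add: comp_hom_assoc[symmetric] comp_idm_right)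
    show "\<forall>\<delta> \<in> hom C A B. comp C (comp C \<delta> \<nu>) \<eta> = \<delta>"
      using \<eta> \<nu> \<nu>\<eta> by (simp add: comp_hom_assoc[symmetric] comp_idm_right)
  qed (use \<eta> \<nu> comp_in_hom in blast)+
qed

lemma automorphism_endofunctor: "automorphism C PO PM \<Longrightarrow> endofunctor C PO PM"
  unfolding automorphism_def by blast

lemma endofunctor_hom: "endofunctor C PO PM \<Longrightarrow> f \<in> hom C A B \<Longrightarrow> PM f \<in> hom C (PO A) (PO B)"
  unfolding endofunctor_def hom_def by auto

lemma endofunctor_comp:
  "endofunctor C PO PM \<Longrightarrow> f \<in> hom C A B \<Longrightarrow> g \<in> hom C B D \<Longrightarrow>
    PM (comp C g f) = comp C (PM g) (PM f)"
  unfolding endofunctor_def hom_def by auto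

lemma automorphism_surj_Ob:
  assumes "automorphism C PO PM" and "D \<in> Ob C"
  obtains D' where "D' \<in> Ob C" and "PO D' = D"
  using assms unfolding automorphism_def endofunctor_def by metis

lemma automorphism_bij_betw_hom:
  assumes "automorphism C PO PM" and A: "A \<in> Ob C" and B: "B \<in> Ob C"
  shows "bij_betw PM (hom C A B) (hom C (PO A) (PO B))"
proof -
  obtain PO' PM' where "endofunctor C PO PM" and "endofunctor C PO' PM'"
    and PO'_PO: "\<And>A. A \<in> Ob C \<Longrightarrow> PO' (PO A) = A"
    and PM'_PM: "\<And>f. f \<in> Mor C \<Longrightarrow> PM' (PM f) = f \<and> PM (PM' f) = f"
    using assms(1) unfolding automorphism_def by blast
  then show ?thesis
    using endofunctor_hom PO'_PO[OF A] PO'_PO[OF B]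
    by (intro bij_betw_byWitness[where f' = PM']) (fastforce simp: hom_def)+
qed

lemma automorphism_epi:
  assumes \<Phi>: "automorphism C PO PM" and "epi C f" and f: "f \<in> hom C A B"
  shows "epi C (PM f)"
proof -
  have A: "A \<in> Ob C" and B: "B \<in> Ob C"
    using f hom_Ob by auto
  have \<Phi>_endo: "endofunctor C PO PM"
    using \<Phi> by (rule automorphism_endofunctor)
  show ?thesis
  proof (rule epiI)
    show "PM f \<in> hom C (PO A) (PO B)"
      using f \<Phi>_endo endofunctor_hom by blast
  next
    fix D g h
    assume g: "g \<in> hom C (PO B) D" and h: "h \<in> hom C (PO B) D"
      and eq: "comp C g (PM f) = comp C h (PM f)"
    obtain D' where D': "D' \<in> Ob C" and "PO D' = D"
      using \<Phi> conjunct2[OF hom_Ob[OF g]] by (rule automorphism_surj_Ob)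
    have bij_BD': "bij_betw PM (hom C B D') (hom C (PO B) (PO D'))"
      and bij_AD': "bij_betw PM (hom C A D') (hom C (PO A) (PO D'))"
      using automorphism_bij_betw_hom[OF \<Phi>] A B D' by auto
    have "g \<in> PM ` hom C B D'" and "h \<in> PM ` hom C B D'"
      using g h bij_BD' \<open>PO D' = D\<close> by (auto simp: bij_betw_def)
    then obtain g' h' where g': "g' \<in> hom C B D'" "PM g' = g" and h': "h' \<in> hom C B D'" "PM h' = h"
      by blast
    have "PM (comp C g' f) = PM (comp C h' f)"
      using eq g' h' f endofunctor_comp[OF \<Phi>_endo] by auto
    then have "comp C g' f = comp C h' f"
      using bij_AD' comp_in_hom[OF f] g' h' unfolding bij_betw_def inj_on_def by blast
    then show "g = h"
      using epiD[OF \<open>epi C f\<close> f] g' h' by metis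
  qed
qed

end

locale concrete_category = valid_category C
  for C :: "('o, 'm) category" +
  fixes QO :: "'o \<Rightarrow> 'x set" and QM :: "'m \<Rightarrow> 'x \<Rightarrow> 'x"
  assumes faithful: "faithful_set_functor C QO QM"
begin

lemma QM_in_QO: "f \<in> hom C A B \<Longrightarrow> x \<in> QO A \<Longrightarrow> QM f x \<in> QO B"
  using faithful unfolding faithful_set_functor_def set_functor_def hom_def by auto

lemma QM_comp:
  "f \<in> hom C A B \<Longrightarrow> g \<in> hom C B D \<Longrightarrow> x \<in> QO A \<Longrightarrow> QM (comp C g f) x = QM g (QM f x)"
  using faithful unfolding faithful_set_functor_def set_functor_def hom_def by auto

lemma faithfulD:
  "f \<in> hom C A B \<Longrightarrow> g \<in> hom C A B \<Longrightarrow> (\<And>x. x \<in> QO A \<Longrightarrow> QM f x = QM g x) \<Longrightarrow> f = g"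
  using faithful unfolding faithful_set_functor_def hom_def by auto

lemma epi_if_surjective:
  assumes f: "f \<in> hom C A B" and surj: "QM f ` QO A = QO B"
  shows "epi C f"
proof (rule epiI[OF f])
  fix D g h
  assume g: "g \<in> hom C B D" and h: "h \<in> hom C B D" and eq: "comp C g f = comp C h f"
  show "g = h"
  proof (rule faithfulD[OF g h])
    fix y assume "y \<in> QO B"
    then obtain x where x: "x \<in> QO A" and y: "y = QM f x"
      using surj by blast
    show "QM g y = QM h y"
      using QM_comp[OF f g x] QM_comp[OF f h x] eq unfolding y by simp
  qed
qed

lemma mono_if_injective:
  assumes f: "f \<in> hom C A B" and inj: "inj_on (QM f) (QO A)"
  shows "mono C f"
proof (rule monoI[OF f])
  fix D g h
  assume g: "g \<in> hom C D A" and h: "h \<in> hom C D A" and eq: "comp C f g = comp C f h"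
  show "g = h"
  proof (rule faithfulD[OF g h])
    fix x assume x: "x \<in> QO D"
    have "QM f (QM g x) = QM f (QM h x)"
      using QM_comp[OF g f x] QM_comp[OF h f x] eq by simp
    then show "QM g x = QM h x"
      by (rule inj_onD[OF inj _ QM_in_QO[OF g x] QM_in_QO[OF h x]])
  qed
qed

lemma automorphism_ex_epi:
  assumes \<Phi>: "automorphism C PO PM" and "cond_2Q C QO QM A0" and A0: "A0 \<in> Ob C"
  shows "\<exists>\<eta> \<in> hom C A0 (PO A0). epi C \<eta>"
proof -
  obtain A' where A': "A' \<in> Ob C" and "PO A' = A0"
    using \<Phi> A0 by (rule automorphism_surj_Ob)
  obtain \<alpha> where \<alpha>: "\<alpha> \<in> hom C A' A0" and "QM \<alpha> ` QO A' = QO A0"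
    using \<open>cond_2Q C QO QM A0\<close> A' unfolding cond_2Q_def by blast
  then have "epi C \<alpha>"
    by (rule epi_if_surjective)
  with \<Phi> have "epi C (PM \<alpha>)"
    using \<alpha> by (rule automorphism_epi)
  moreover have "PM \<alpha> \<in> hom C A0 (PO A0)"
    using endofunctor_hom[OF automorphism_endofunctor[OF \<Phi>] \<alpha>] \<open>PO A' = A0\<close> by simp
  ultimately show ?thesis
    by blast
qed

end

locale represented_concrete_category = concrete_category C QO QM
  for C :: "('o, 'm) category" and QO :: "'o \<Rightarrow> 'x set" and QM :: "'m \<Rightarrow> 'x \<Rightarrow> 'x" +
  fixes A0 :: 'o and x0 :: 'x
  assumes A0_Ob: "A0 \<in> Ob C" and x0_QO: "x0 \<in> QO A0"
    and represents: "cond_1Q C QO QM A0 x0"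
begin

lemma bij_betw_eval_x0:
  assumes A: "A \<in> Ob C"
  shows "bij_betw (\<lambda>\<alpha>. QM \<alpha> x0) (hom C A0 A) (QO A)"
proof -
  have unique: "\<exists>!\<alpha>. \<alpha> \<in> hom C A0 A \<and> QM \<alpha> x0 = a" if "a \<in> QO A" for a
    using represents A that unfolding cond_1Q_def by blast
  show ?thesis
    unfolding bij_betw_def inj_on_def
  proof (intro conjI ballI impI equalityI subsetI)
    fix \<alpha> \<beta> assume \<alpha>: "\<alpha> \<in> hom C A0 A" and "\<beta> \<in> hom C A0 A" "QM \<alpha> x0 = QM \<beta> x0"
    with unique[OF QM_in_QO[OF \<alpha> x0_QO]] show "\<alpha> = \<beta>"
      by (elim ex1E) auto
  next
    fix a assume "a \<in> QO A"
    with unique show "a \<in> (\<lambda>\<alpha>. QM \<alpha> x0) ` hom C A0 A"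
      by (metis ex1_implies_ex image_eqI)
  next
    fix a assume "a \<in> (\<lambda>\<alpha>. QM \<alpha> x0) ` hom C A0 A"
    then show "a \<in> QO A"
      using QM_in_QO x0_QO by blast
  qed
qed

definition rep_mor :: "'o \<Rightarrow> 'x \<Rightarrow> 'm" where
  "rep_mor A = inv_into (hom C A0 A) (\<lambda>\<alpha>. QM \<alpha> x0)"

lemma bij_betw_rep_mor: "A \<in> Ob C \<Longrightarrow> bij_betw (rep_mor A) (QO A) (hom C A0 A)"
  unfolding rep_mor_def by (rule bij_betw_inv_into[OF bij_betw_eval_x0])

lemma rep_mor_in_hom: "A \<in> Ob C \<Longrightarrow> a \<in> QO A \<Longrightarrow> rep_mor A a \<in> hom C A0 A"
  using bij_betw_rep_mor bij_betwE by blast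

lemma QM_rep_mor: "A \<in> Ob C \<Longrightarrow> a \<in> QO A \<Longrightarrow> QM (rep_mor A a) x0 = a"
  unfolding rep_mor_def by (rule bij_betw_inv_into_right[OF bij_betw_eval_x0])

lemma rep_mor_QM: "\<alpha> \<in> hom C A0 A \<Longrightarrow> rep_mor A (QM \<alpha> x0) = \<alpha>"
  unfolding rep_mor_def using hom_Ob bij_betw_inv_into_left[OF bij_betw_eval_x0] by blast

lemma rep_mor_QM_comp:
  assumes f: "f \<in> hom C A B" and a: "a \<in> QO A"
  shows "rep_mor B (QM f a) = comp C f (rep_mor A a)"
proof -
  have "rep_mor A a \<in> hom C A0 A" "QM (rep_mor A a) x0 = a"
    using hom_Ob[OF f] a by (auto intro: rep_mor_in_hom QM_rep_mor)
  then show ?thesis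
    using rep_mor_QM[OF comp_in_hom] QM_comp[OF _ f x0_QO] f by metis
qed

lemma injective_if_mono:
  assumes "mono C f" and f: "f \<in> hom C A B"
  shows "inj_on (QM f) (QO A)"
proof (rule inj_onI)
  fix a b assume a: "a \<in> QO A" and b: "b \<in> QO A" and eq: "QM f a = QM f b"
  have A: "A \<in> Ob C"
    using f hom_Ob by blast
  have "comp C f (rep_mor A a) = comp C f (rep_mor A b)"
    using rep_mor_QM_comp[OF f a] rep_mor_QM_comp[OF f b] eq by simp
  then have "rep_mor A a = rep_mor A b"
    using monoD[OF \<open>mono C f\<close> f] rep_mor_in_hom[OF A] a b by blast
  then show "a = b"
    using QM_rep_mor[OF A] a b by metis
qed

definition transport :: "'m \<Rightarrow> ('m \<Rightarrow> 'm) \<Rightarrow> 'o \<Rightarrow> 'x \<Rightarrow> 'x" where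
  "transport \<eta> PM A a = QM (comp C (PM (rep_mor A a)) \<eta>) x0"

lemma bij_betw_transport:
  assumes \<Phi>: "automorphism C PO PM" and "iso C \<eta>" and \<eta>: "\<eta> \<in> hom C A0 (PO A0)"
    and A: "A \<in> Ob C"
  shows "bij_betw (transport \<eta> PM A) (QO A) (QO (PO A))"
proof -
  have PO_A: "PO A \<in> Ob C"
    using \<Phi> A unfolding automorphism_def endofunctor_def by blast
  have "bij_betw ((\<lambda>\<alpha>. QM \<alpha> x0) \<circ> (\<lambda>\<gamma>. comp C \<gamma> \<eta>) \<circ> PM \<circ> rep_mor A) (QO A) (QO (PO A))"
    using bij_betw_rep_mor[OF A] automorphism_bij_betw_hom[OF \<Phi> A0_Ob A]
      bij_betw_precomp_iso[OF \<open>iso C \<eta>\<close> \<eta>] bij_betw_eval_x0[OF PO_A]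
    by (auto intro!: bij_betw_trans)
  then show ?thesis
    unfolding transport_def o_def .
qed

lemma transport_natural:
  assumes \<Phi>: "automorphism C PO PM" and \<eta>: "\<eta> \<in> hom C A0 (PO A0)"
    and f: "f \<in> hom C A B" and a: "a \<in> QO A"
  shows "QM (PM f) (transport \<eta> PM A a) = transport \<eta> PM B (QM f a)"
proof -
  have \<Phi>_endo: "endofunctor C PO PM"
    using \<Phi> by (rule automorphism_endofunctor)
  define \<alpha> where "\<alpha> = rep_mor A a"
  have \<alpha>: "\<alpha> \<in> hom C A0 A"
    using rep_mor_in_hom hom_Ob[OF f] a unfolding \<alpha>_def by blast
  have \<Phi>\<alpha>\<eta>: "comp C (PM \<alpha>) \<eta> \<in> hom C A0 (PO A)"
    using comp_in_hom[OF \<eta> endofunctor_hom[OF \<Phi>_endo \<alpha>]] .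
  have "transport \<eta> PM B (QM f a) = QM (comp C (comp C (PM f) (PM \<alpha>)) \<eta>) x0"
    unfolding transport_def rep_mor_QM_comp[OF f a] \<alpha>_def[symmetric]
    using endofunctor_comp[OF \<Phi>_endo \<alpha> f] by simp
  also have "\<dots> = QM (comp C (PM f) (comp C (PM \<alpha>) \<eta>)) x0"
    using comp_hom_assoc[OF \<eta> endofunctor_hom[OF \<Phi>_endo \<alpha>] endofunctor_hom[OF \<Phi>_endo f]] by simp
  also have "\<dots> = QM (PM f) (transport \<eta> PM A a)"
    unfolding transport_def \<alpha>_def[symmetric]
    using QM_comp[OF \<Phi>\<alpha>\<eta> endofunctor_hom[OF \<Phi>_endo f] x0_QO] .
  finally show ?thesis ..
qed

lemma potentially_inner_if_iso:
  assumes \<Phi>: "automorphism C PO PM" and "iso C \<eta>" and \<eta>: "\<eta> \<in> hom C A0 (PO A0)"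
  shows "potentially_inner C QO QM PO PM"
  unfolding potentially_inner_def
proof (intro exI conjI ballI)
  fix A assume "A \<in> Ob C"
  then show "bij_betw (transport \<eta> PM A) (QO A) (QO (PO A))"
    using bij_betw_transport[OF \<Phi> \<open>iso C \<eta>\<close> \<eta>] by blast
next
  fix f x assume "f \<in> Mor C" and "x \<in> QO (dom C f)"
  then show "QM (PM f) (transport \<eta> PM (dom C f) x) = transport \<eta> PM (cod C f) (QM f x)"
    using transport_natural[OF \<Phi> \<eta>] by (simp add: hom_def)
qed

end

theorem lemma2:
  fixes C :: "('o, 'm) category"
    and QO :: "'o \<Rightarrow> 'x set" and QM :: "'m \<Rightarrow> 'x \<Rightarrow> 'x"
    and A0 :: 'o and x0 :: 'x
  assumes "is_category C"
    and "faithful_set_functor C QO QM"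
    and "A0 \<in> Ob C" and "x0 \<in> QO A0"
    and "cond_1Q C QO QM A0 x0"
    and "cond_2Q C QO QM A0"
  shows "(\<forall>\<mu> \<in> Mor C. QM \<mu> ` QO (dom C \<mu>) = QO (cod C \<mu>) \<longrightarrow> epi C \<mu>)
    \<and> (\<forall>\<mu> \<in> Mor C. mono C \<mu> \<longleftrightarrow> inj_on (QM \<mu>) (QO (dom C \<mu>)))
    \<and> (\<forall>PO PM. automorphism C PO PM \<longrightarrow>
          (\<exists>\<eta> \<in> hom C A0 (PO A0). epi C \<eta>)
        \<and> (\<forall>\<eta> \<in> hom C A0 (PO A0). epi C \<eta> \<and> iso C \<eta> \<longrightarrow>
             potentially_inner C QO QM PO PM))"
proof -
  interpret represented_concrete_category C QO QM A0 x0
    using assms by unfold_locales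
  have in_hom: "\<mu> \<in> hom C (dom C \<mu>) (cod C \<mu>)" if "\<mu> \<in> Mor C" for \<mu>
    using that by (simp add: hom_def)
  have "epi C \<mu>" if "\<mu> \<in> Mor C" and "QM \<mu> ` QO (dom C \<mu>) = QO (cod C \<mu>)" for \<mu>
    using epi_if_surjective in_hom that by blast
  moreover have "mono C \<mu> \<longleftrightarrow> inj_on (QM \<mu>) (QO (dom C \<mu>))" if "\<mu> \<in> Mor C" for \<mu>
    using mono_if_injective injective_if_mono in_hom[OF that] by blast
  moreover have "(\<exists>\<eta> \<in> hom C A0 (PO A0). epi C \<eta>)
      \<and> (\<forall>\<eta> \<in> hom C A0 (PO A0). epi C \<eta> \<and> iso C \<eta> \<longrightarrow> potentially_inner C QO QM PO PM)"
    if "automorphism C PO PM" for PO PM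
    using automorphism_ex_epi[OF that \<open>cond_2Q C QO QM A0\<close> A0_Ob]
      potentially_inner_if_iso[OF that] by blast
  ultimately show ?thesis
    by blast
qed

end
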